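(* Let $0<p\le\infty$ and $0<q_1<q_2\le\infty$. Then $\ell^{p,q_1}\hookrightarrow\ell^{p,q_2}$, and for all $a\in\ell^{p,q_1}$: 1. $\|a\|_{p,q_2}\le (q_1/p)^{1/q_1-1/q_2}\|a\|_{p,q_1}$ if $p<q_1$; 2. $\|a\|_{p,q_2}\le\|a\|_{p,q_1}$ if $p\ge q_1$.
   Context: For a scalar sequence $a=(a_n)$, its decreasing rearrangement is $a^*_n=\inf\{\omega>0:\#\{k:|a_k|>\omega\}\le n-1\}$. For $p,q\in(0,\infty]$, the Lorentz sequence space $\ell^{p,q}$ consists of all sequences $a$ with $\|a\|_{p,q}<\infty$, where $\|a\|_{p,q}=\big(\sum_{n=1}^\infty (a_n^* )^q n^{q/p-1}\big)^{1/q}$ if $q<\infty$, and $\|a\|_{p,\infty}=\sup_{n}n^{1/p}a_n^*$; convention $1/\infty=0$. $X\hookrightarrow Y$ means $X\subset Y$ as a linear subspace and there is $C\ge0$ with $\|a\|_Y\le C\|a\|_X$ for all $a\in X$. *)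

theory Defs
  imports "HOL-Analysis.Analysis"
begin

text \<open>Parameters p, q range over (0, infinity], modelled as ennreal with p > 0.
  Reciprocal with the convention 1/infinity = 0, as a real number.\<close>
definition inv_e :: "ennreal \<Rightarrow> real" where
  "inv_e x = (if x = (top::ennreal) then 0 else 1 / enn2real x)"

definition epow :: "ennreal \<Rightarrow> real \<Rightarrow> ennreal" where
  "epow x r = (if x = (top::ennreal) then (if r > 0 then (top::ennreal) else if r = 0 then 1 else 0)
               else ennreal (enn2real x powr r))"

text \<open>Decreasing rearrangement a^*_n for n >= 1 (the sequence a is indexed by nat;
  the index set is irrelevant for counting). Infimum of the empty set is infinity.\<close>
definition dec_rearr :: "(nat \<Rightarrow> complex) \<Rightarrow> nat \<Rightarrow> ennreal" where
  "dec_rearr a n = Inf {ennreal w | w. w > 0 \<and> finite {k. norm (a k) > w}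
                                     \<and> card {k. norm (a k) > w} \<le> n - 1}"

definition lorentz_norm :: "ennreal \<Rightarrow> ennreal \<Rightarrow> (nat \<Rightarrow> complex) \<Rightarrow> ennreal" where
  "lorentz_norm p q a =
     (if q = (top::ennreal) then (SUP n\<in>{1..}. ennreal (real n powr inv_e p) * dec_rearr a n)
      else epow (\<Sum>n. epow (dec_rearr a (Suc n)) (enn2real q)
                        * ennreal (real (Suc n) powr (enn2real q * inv_e p - 1)))
                (1 / enn2real q))"

definition lorentz_space :: "ennreal \<Rightarrow> ennreal \<Rightarrow> (nat \<Rightarrow> complex) set" where
  "lorentz_space p q = {a. lorentz_norm p q a < (top::ennreal)}"

definition lorentz_embeds :: "ennreal \<Rightarrow> ennreal \<Rightarrow> ennreal \<Rightarrow> ennreal \<Rightarrow> bool" where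
  "lorentz_embeds p1 q1 p2 q2 \<longleftrightarrow>
     lorentz_space p1 q1 \<subseteq> lorentz_space p2 q2 \<and>
     (\<exists>C::real. C \<ge> 0 \<and> (\<forall>a\<in>lorentz_space p1 q1.
        lorentz_norm p2 q2 a \<le> ennreal C * lorentz_norm p1 q1 a))"

end

theory Submission
  imports Defs
begin

text \<open>Let d be the decreasing rearrangement of a and s = 1/p. Since d is nonincreasing,
  d_n^q * (\<Sum>k=1..n. k^(qs-1)) \<le> ||a||_(p,q)^q, and n^(qs) \<le> max(1, qs) * (\<Sum>k=1..n. k^(qs-1));
  hence n^s d_n \<le> max(1, q/p)^(1/q) * ||a||_(p,q), which is the embedding into l^(p,\<infinity>).
  For finite q' > q write d_n^q' n^(q's-1) = d_n^q n^(qs-1) * (n^s d_n)^(q'-q) and bound the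
  last factor by this estimate; summing gives
  ||a||_(p,q')^q' \<le> ||a||_(p,\<infinity>)^(q'-q) * ||a||_(p,q)^q.
  The constant max(1, q/p) is q/p for p < q and 1 otherwise.\<close>

lemma Suc_powr_diff_le:
  fixes r :: real
  assumes "r \<ge> 1"
  shows "real (Suc n) powr r - real n powr r \<le> r * real (Suc n) powr (r - 1)"
proof (cases "n = 0")
  case True
  then show ?thesis using assms by simp
next
  case False
  obtain z where z: "real n < z" "z < real (Suc n)"
    and mvt: "real (Suc n) powr r - real n powr r = (real (Suc n) - real n) * (r * z powr (r - 1))"
    using False MVT2[of "real n" "real (Suc n)" "\<lambda>x. x powr r" "\<lambda>x. r * x powr (r - 1)"]
      has_real_derivative_powr by force
  have "z powr (r - 1) \<le> real (Suc n) powr (r - 1)"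
    using z assms by (intro powr_mono2) auto
  then show ?thesis using mvt assms by simp
qed

lemma powr_le_sum_Suc_powr:
  fixes r :: real
  assumes "r \<ge> 0"
  shows "real n powr r \<le> max 1 r * (\<Sum>k<n. real (Suc k) powr (r - 1))"
proof (cases "r \<le> 1")
  case True
  have "real n powr r = (\<Sum>k<n. real n powr (r - 1))"
    using assms by (cases "n = 0") (simp_all add: powr_diff)
  also have "\<dots> \<le> (\<Sum>k<n. real (Suc k) powr (r - 1))"
    using True by (intro sum_mono powr_mono2') auto
  finally show ?thesis using True by simp
next
  case False
  have "real n powr r = (\<Sum>k<n. real (Suc k) powr r - real k powr r)"
    using False sum_lessThan_telescope[of "\<lambda>k. real k powr r" n] by simp
  also have "\<dots> \<le> (\<Sum>k<n. r * real (Suc k) powr (r - 1))"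
    using False by (intro sum_mono Suc_powr_diff_le) auto
  finally show ?thesis using False by (simp add: sum_distrib_left)
qed

text \<open>With s = 1/p, lorentz_term q s d n is the summand of index n+1 of ||a||_(p,q)^q.\<close>

definition lorentz_term :: "real \<Rightarrow> real \<Rightarrow> (nat \<Rightarrow> real) \<Rightarrow> nat \<Rightarrow> real" where
  "lorentz_term q s d n = d (Suc n) powr q * real (Suc n) powr (q * s - 1)"

lemma lorentz_term_nonneg: "0 \<le> lorentz_term q s d n"
  by (simp add: lorentz_term_def)

lemma powr_mult_le_lorentz_sum:
  fixes d :: "nat \<Rightarrow> real"
  assumes d: "\<And>n. 0 \<le> d n" "antimono d" and "0 \<le> s" "0 < q"
    and summable: "summable (lorentz_term q s d)"
  shows "real n powr s * d n \<le> (max 1 (q * s) * suminf (lorentz_term q s d)) powr (1 / q)"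
proof -
  let ?W = "\<Sum>k<n. real (Suc k) powr (q * s - 1)"
  have "d n powr q * ?W \<le> (\<Sum>k<n. lorentz_term q s d k)"
    unfolding sum_distrib_left lorentz_term_def
    using assms by (intro sum_mono mult_right_mono powr_mono2 antimonoD[OF d(2)]) auto
  also have "\<dots> \<le> suminf (lorentz_term q s d)"
    using summable by (intro sum_le_suminf) (auto simp: lorentz_term_nonneg)
  finally have "max 1 (q * s) * (d n powr q * ?W) \<le> max 1 (q * s) * suminf (lorentz_term q s d)"
    by (intro mult_left_mono) auto
  moreover have "d n powr q * real n powr (q * s) \<le> max 1 (q * s) * (d n powr q * ?W)"
    using powr_le_sum_Suc_powr[of "q * s" n] assms
    by (simp add: mult.left_commute[of "max 1 (q * s)"] mult_left_mono)
  ultimately have "(d n powr q * real n powr (q * s)) powr (1 / q)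
      \<le> (max 1 (q * s) * suminf (lorentz_term q s d)) powr (1 / q)"
    using assms by (intro powr_mono2) auto
  also have "(d n powr q * real n powr (q * s)) powr (1 / q) = real n powr s * d n"
    using assms by (simp add: powr_mult powr_powr)
  finally show ?thesis .
qed

lemma lorentz_term_exponent_le:
  fixes d :: "nat \<Rightarrow> real"
  assumes "0 \<le> d (Suc n)" "real (Suc n) powr s * d (Suc n) \<le> B" "q \<le> q'"
  shows "lorentz_term q' s d n \<le> lorentz_term q s d n * B powr (q' - q)"
proof (cases "d (Suc n) = 0")
  case True
  then show ?thesis by (simp add: lorentz_term_def)
next
  case False
  let ?m = "real (Suc n)"
  have "lorentz_term q' s d n = lorentz_term q s d n * (?m powr s * d (Suc n)) powr (q' - q)"
  proof -
    have "d (Suc n) powr q' = d (Suc n) powr q * d (Suc n) powr (q' - q)"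
      by (simp flip: powr_add)
    moreover have "?m powr (q' * s - 1) = ?m powr (q * s - 1) * ?m powr (s * (q' - q))"
      by (simp add: algebra_simps flip: powr_add)
    ultimately show ?thesis
      using assms(1) by (simp add: lorentz_term_def powr_mult powr_powr mult_ac)
  qed
  also have "\<dots> \<le> lorentz_term q s d n * B powr (q' - q)"
    using assms False by (intro mult_left_mono powr_mono2) (auto simp: lorentz_term_nonneg)
  finally show ?thesis .
qed

lemma lorentz_sum_exponent_mono:
  fixes d :: "nat \<Rightarrow> real"
  assumes d: "\<And>n. 0 \<le> d n" "antimono d" and "0 \<le> s" "0 < q" "q < q'"
    and summable: "summable (lorentz_term q s d)"
  shows "summable (lorentz_term q' s d)"
    and "suminf (lorentz_term q' s d) powr (1 / q')
           \<le> max 1 (q * s) powr (1 / q - 1 / q') * suminf (lorentz_term q s d) powr (1 / q)"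
proof -
  define S where "S = suminf (lorentz_term q s d)"
  define c where "c = max 1 (q * s)"
  define B where "B = (c * S) powr (1 / q)"
  have S: "0 \<le> S"
    unfolding S_def using summable by (intro suminf_nonneg) (auto simp: lorentz_term_nonneg)
  have term_le: "lorentz_term q' s d n \<le> lorentz_term q s d n * B powr (q' - q)" for n
    using assms powr_mult_le_lorentz_sum[OF assms(1-4,6), of "Suc n"]
    unfolding B_def c_def S_def by (intro lorentz_term_exponent_le) auto
  have summable_bound: "summable (\<lambda>n. lorentz_term q s d n * B powr (q' - q))"
    using summable by (rule summable_mult2)
  show summable': "summable (lorentz_term q' s d)"
    using summable_bound
    by (rule summable_comparison_test') (simp add: term_le lorentz_term_nonneg)
  have "suminf (lorentz_term q' s d) \<le> S * B powr (q' - q)"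
    unfolding S_def using suminf_le[OF term_le summable' summable_bound] suminf_mult2[OF summable]
    by simp
  also have "\<dots> = c powr ((q' - q) / q) * S powr (q' / q)"
  proof -
    have "S powr (q' / q) = S powr (1 + (q' - q) / q)"
      using assms by (simp add: field_simps)
    then have "S * S powr ((q' - q) / q) = S powr (q' / q)"
      using S by (cases "S = 0") (simp_all add: powr_add)
    then show ?thesis
      using S unfolding B_def by (simp add: powr_mult powr_powr)
  qed
  finally have "suminf (lorentz_term q' s d) powr (1 / q')
      \<le> (c powr ((q' - q) / q) * S powr (q' / q)) powr (1 / q')"
    using assms summable' by (intro powr_mono2) (auto intro: suminf_nonneg simp: lorentz_term_nonneg)
  also have "\<dots> = c powr (1 / q - 1 / q') * S powr (1 / q)"
    using S assms by (simp add: powr_mult powr_powr diff_divide_distrib)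
  finally show "suminf (lorentz_term q' s d) powr (1 / q')
           \<le> max 1 (q * s) powr (1 / q - 1 / q') * suminf (lorentz_term q s d) powr (1 / q)"
    unfolding c_def S_def .
qed

text \<open>Only meaningful where dec_rearr a is finite, since enn2real maps \<infinity> to 0.\<close>

definition dec_rearr_real :: "(nat \<Rightarrow> complex) \<Rightarrow> nat \<Rightarrow> real" where
  "dec_rearr_real a n = enn2real (dec_rearr a n)"

lemma dec_rearr_real_nonneg: "0 \<le> dec_rearr_real a n"
  by (simp add: dec_rearr_real_def)

lemma dec_rearr_eq_ennreal: "dec_rearr a n < top \<Longrightarrow> dec_rearr a n = ennreal (dec_rearr_real a n)"
  by (simp add: dec_rearr_real_def less_top)

lemma inv_e_nonneg: "0 \<le> inv_e x"
  by (simp add: inv_e_def)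

lemma epow_ennreal: "0 \<le> x \<Longrightarrow> epow (ennreal x) r = ennreal (x powr r)"
  by (simp add: epow_def)

lemma epow_top: "0 < r \<Longrightarrow> epow top r = top"
  by (simp add: epow_def)

lemma antimono_dec_rearr: "antimono (dec_rearr a)"
  unfolding antimono_def dec_rearr_def by (intro allI impI Inf_superset_mono) auto

lemma dec_rearr_0: "dec_rearr a 0 = dec_rearr a 1"
  by (simp add: dec_rearr_def)

lemma antimono_dec_rearr_real:
  assumes "\<And>n. dec_rearr a n < top"
  shows "antimono (dec_rearr_real a)"
  using assms antimonoD[OF antimono_dec_rearr]
  unfolding antimono_def dec_rearr_real_def by (blast intro: enn2real_mono)

lemma dec_rearr_less_top:
  assumes "0 < Q" and "a \<in> lorentz_space p (ennreal Q)"
  shows "dec_rearr a n < top"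
proof -
  have "dec_rearr a (Suc m) \<noteq> top" for m
  proof
    let ?T = "\<lambda>n. epow (dec_rearr a (Suc n)) Q * ennreal (real (Suc n) powr (Q * inv_e p - 1))"
    assume "dec_rearr a (Suc m) = top"
    then have "?T m = top"
      using assms(1) by (simp add: epow_top ennreal_top_mult)
    then have "suminf ?T = top"
      using ennreal_suminf_lessD[of ?T top m] by (metis less_irrefl top.not_eq_extremum)
    then have "lorentz_norm p (ennreal Q) a = top"
      using assms(1) by (simp add: lorentz_norm_def epow_top)
    then show False
      using assms(2) by (simp add: lorentz_space_def)
  qed
  then show ?thesis
    by (cases n) (auto simp: dec_rearr_0 less_top)
qed

lemma lorentz_norm_ennreal_eq:
  assumes "0 < Q" and "\<And>n. dec_rearr a n < top"
  shows "lorentz_norm p (ennreal Q) a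
           = epow (\<Sum>n. ennreal (lorentz_term Q (inv_e p) (dec_rearr_real a) n)) (1 / Q)"
proof -
  have "epow (dec_rearr a n) Q = ennreal (dec_rearr_real a n powr Q)" for n
    using dec_rearr_eq_ennreal[OF assms(2)] by (metis epow_ennreal dec_rearr_real_nonneg)
  then show ?thesis
    using assms(1) unfolding lorentz_norm_def lorentz_term_def by (simp add: ennreal_mult)
qed

lemma summable_lorentz_term:
  assumes "0 < Q" and "a \<in> lorentz_space p (ennreal Q)"
  shows "summable (lorentz_term Q (inv_e p) (dec_rearr_real a))"
proof (rule summable_suminf_not_top)
  show "(\<Sum>n. ennreal (lorentz_term Q (inv_e p) (dec_rearr_real a) n)) \<noteq> top"
    using assms lorentz_norm_ennreal_eq[OF assms(1) dec_rearr_less_top[OF assms]]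
    by (auto simp: lorentz_space_def epow_top)
qed (rule lorentz_term_nonneg)

lemma lorentz_norm_eq_suminf_powr:
  assumes "0 < Q" and "\<And>n. dec_rearr a n < top"
    and "summable (lorentz_term Q (inv_e p) (dec_rearr_real a))"
  shows "lorentz_norm p (ennreal Q) a
           = ennreal (suminf (lorentz_term Q (inv_e p) (dec_rearr_real a)) powr (1 / Q))"
  using assms
  by (simp add: lorentz_norm_ennreal_eq suminf_ennreal2 lorentz_term_nonneg suminf_nonneg epow_ennreal)

lemma lorentz_norm_top_le:
  assumes "0 < Q" and a: "a \<in> lorentz_space p (ennreal Q)"
  shows "lorentz_norm p top a
           \<le> ennreal (max 1 (Q * inv_e p) powr (1 / Q)) * lorentz_norm p (ennreal Q) a"
proof -
  let ?c = "max 1 (Q * inv_e p)" and ?S = "suminf (lorentz_term Q (inv_e p) (dec_rearr_real a))"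
  have fin: "\<And>n. dec_rearr a n < top"
    using dec_rearr_less_top[OF assms] .
  note summable = summable_lorentz_term[OF assms]
  have "ennreal (real n powr inv_e p) * dec_rearr a n \<le> ennreal ((?c * ?S) powr (1 / Q))" for n
  proof -
    have "real n powr inv_e p * dec_rearr_real a n \<le> (?c * ?S) powr (1 / Q)"
      using antimono_dec_rearr_real[OF fin] assms(1) summable
      by (intro powr_mult_le_lorentz_sum dec_rearr_real_nonneg inv_e_nonneg)
    then show ?thesis
      using dec_rearr_eq_ennreal[OF fin] dec_rearr_real_nonneg
      by (metis ennreal_leI ennreal_mult powr_ge_zero)
  qed
  then have "lorentz_norm p top a \<le> ennreal ((?c * ?S) powr (1 / Q))"
    unfolding lorentz_norm_def by (simp add: SUP_least)
  also have "\<dots> = ennreal (?c powr (1 / Q)) * lorentz_norm p (ennreal Q) a"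
    using lorentz_norm_eq_suminf_powr[OF assms(1) fin summable] summable
    by (simp add: powr_mult ennreal_mult suminf_nonneg lorentz_term_nonneg)
  finally show ?thesis .
qed

lemma lorentz_norm_le_of_exponent_less:
  assumes "0 < Q" "Q < Q'" and a: "a \<in> lorentz_space p (ennreal Q)"
  shows "lorentz_norm p (ennreal Q') a
           \<le> ennreal (max 1 (Q * inv_e p) powr (1 / Q - 1 / Q')) * lorentz_norm p (ennreal Q) a"
proof -
  have fin: "\<And>n. dec_rearr a n < top"
    using dec_rearr_less_top[OF assms(1) a] .
  note summable = summable_lorentz_term[OF assms(1) a]
  note exponent_mono = lorentz_sum_exponent_mono[OF dec_rearr_real_nonneg
      antimono_dec_rearr_real[OF fin] inv_e_nonneg assms(1,2) summable]
  have "lorentz_norm p (ennreal Q') a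
          = ennreal (suminf (lorentz_term Q' (inv_e p) (dec_rearr_real a)) powr (1 / Q'))"
    using assms(1,2) fin exponent_mono(1) by (intro lorentz_norm_eq_suminf_powr) auto
  also have "\<dots> \<le> ennreal (max 1 (Q * inv_e p) powr (1 / Q - 1 / Q')
      * suminf (lorentz_term Q (inv_e p) (dec_rearr_real a)) powr (1 / Q))"
    using exponent_mono(2) by (rule ennreal_leI)
  also have "\<dots> = ennreal (max 1 (Q * inv_e p) powr (1 / Q - 1 / Q')) * lorentz_norm p (ennreal Q) a"
    using lorentz_norm_eq_suminf_powr[OF assms(1) fin summable] by (simp add: ennreal_mult)
  finally show ?thesis .
qed

lemma lorentz_norm_exponent_mono:
  assumes "0 < q1" "q1 < q2" and a: "a \<in> lorentz_space p q1"
  shows "lorentz_norm p q2 a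
           \<le> ennreal (max 1 (enn2real q1 * inv_e p) powr (1 / enn2real q1 - inv_e q2))
               * lorentz_norm p q1 a"
proof -
  obtain Q where q1: "q1 = ennreal Q" "0 < Q"
    using assms(1,2) by (cases q1 rule: ennreal_cases) auto
  show ?thesis
  proof (cases "q2 = top")
    case True
    then show ?thesis
      using lorentz_norm_top_le[of Q a p] q1 a by (simp add: inv_e_def)
  next
    case False
    then obtain Q' where "q2 = ennreal Q'" "Q < Q'"
      using assms(2) q1 by (cases q2 rule: ennreal_cases) (auto simp: ennreal_less_iff)
    then show ?thesis
      using lorentz_norm_le_of_exponent_less[of Q Q' a p] q1 a by (simp add: inv_e_def)
  qed
qed

lemma max_one_mult_inv_e_of_less:
  assumes "0 < p" "p < q" "q \<noteq> top"
  shows "max 1 (enn2real q * inv_e p) = enn2real q / enn2real p"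
proof -
  obtain P Q where "p = ennreal P" "q = ennreal Q" "0 < P" "P < Q"
    using assms by (cases p rule: ennreal_cases; cases q rule: ennreal_cases) (auto simp: ennreal_less_iff)
  then show ?thesis
    by (simp add: inv_e_def)
qed

lemma max_one_mult_inv_e_of_ge:
  assumes "q \<le> p"
  shows "max 1 (enn2real q * inv_e p) = 1"
proof (cases "p = top")
  case False
  then obtain P Q where pq: "p = ennreal P" "q = ennreal Q" "0 \<le> P" "0 \<le> Q" "Q \<le> P"
    using assms by (cases p rule: ennreal_cases; cases q rule: ennreal_cases) (auto simp: ennreal_le_iff top_unique)
  have "Q / P \<le> 1"
    using pq by (cases "P = 0") (simp_all add: divide_le_eq_1)
  then show ?thesis
    using pq by (simp add: inv_e_def)
qed (simp add: inv_e_def)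

theorem mainTheorem7:
  fixes p q1 q2 :: ennreal
  assumes "0 < p" and "0 < q1" and "q1 < q2"
  shows "lorentz_embeds p q1 p q2 \<and>
         (\<forall>a\<in>lorentz_space p q1.
            (p < q1 \<longrightarrow> lorentz_norm p q2 a \<le>
               ennreal ((enn2real q1 / enn2real p) powr (1 / enn2real q1 - inv_e q2))
                 * lorentz_norm p q1 a) \<and>
            (q1 \<le> p \<longrightarrow> lorentz_norm p q2 a \<le> lorentz_norm p q1 a))"
proof -
  define C where "C = max 1 (enn2real q1 * inv_e p) powr (1 / enn2real q1 - inv_e q2)"
  have bound: "lorentz_norm p q2 a \<le> ennreal C * lorentz_norm p q1 a"
    if "a \<in> lorentz_space p q1" for a
    unfolding C_def using assms(2,3) that by (rule lorentz_norm_exponent_mono)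
  have "lorentz_space p q1 \<subseteq> lorentz_space p q2"
  proof
    fix a assume a: "a \<in> lorentz_space p q1"
    then have "ennreal C * lorentz_norm p q1 a < top"
      by (simp add: lorentz_space_def ennreal_mult_less_top)
    then show "a \<in> lorentz_space p q2"
      using bound[OF a] by (simp add: lorentz_space_def le_less_trans)
  qed
  then have "lorentz_embeds p q1 p q2"
    unfolding lorentz_embeds_def using bound powr_ge_zero[of _ "1 / enn2real q1 - inv_e q2"]
    unfolding C_def by blast
  moreover have "q1 \<noteq> top"
    using assms(3) by (auto simp: top_unique)
  ultimately show ?thesis
    using bound assms(1) max_one_mult_inv_e_of_less max_one_mult_inv_e_of_ge unfolding C_def by auto
qed

end
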